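(* For any $q\in(1,2)$, with conjugate exponent $p=q/(q-1)$, any $d$ and any $\varepsilon>0$, the $\ell_q$ mean estimation problem in $\mathbb R^d$ can be solved with error $\varepsilon$ by a statistical query algorithm using $2d\log d$ queries to $\mathrm{VSTAT}_D\big((16\log(d)/\varepsilon)^p\big)$.
   Context: For a distribution $D$ over a domain $\mathcal W$ and $n>0$, the oracle $\mathrm{VSTAT}_D(n)$, given any $\phi:\mathcal W\to[0,1]$, returns some value $v$ with $|v-p_\phi|\le\max\{1/n,\sqrt{p_\phi(1-p_\phi)/n}\}$, where $p_\phi=\mathbb E_{\mathbf w\sim D}[\phi(\mathbf w)]$; a statistical query algorithm accesses $D$ only through such calls. The $\ell_q$ mean estimation problem with error $\varepsilon$: given such oracle access to an unknown distribution $D$ supported on the unit $\ell_q$ ball $\mathcal B_q^d$, output $\tilde w\in\mathbb R^d$ with $\|\tilde w-\mathbb E_{\mathbf w\sim D}[\mathbf w]\|_q\le\varepsilon$. *)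

theory Defs
  imports "HOL-Probability.Probability"
begin

definition lq_norm :: "real \<Rightarrow> real ^ 'n \<Rightarrow> real" where
  "lq_norm q x = (\<Sum>i\<in>UNIV. \<bar>x $ i\<bar> powr q) powr (1 / q)"

definition dist_on_lq_ball :: "real \<Rightarrow> (real ^ 'n) measure \<Rightarrow> bool" where
  "dist_on_lq_ball q D \<longleftrightarrow> prob_space D \<and> sets D = sets borel \<and>
     (AE w in D. lq_norm q w \<le> 1)"

definition vstat_answer :: "'w measure \<Rightarrow> real \<Rightarrow> ('w \<Rightarrow> real) \<Rightarrow> real \<Rightarrow> bool" where
  "vstat_answer D n \<phi> v \<longleftrightarrow>
     (let p = (\<integral>w. \<phi> w \<partial>D) in \<bar>v - p\<bar> \<le> max (1 / n) (sqrt (p * (1 - p) / n)))"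

text \<open>A (deterministic, possibly adaptive) statistical query algorithm making k queries:
  the i-th query is chosen as a function of the previous answers (list of length i),
  and the output is a function of all k answers.\<close>
definition sq_query_wf :: "(real list \<Rightarrow> 'w::topological_space \<Rightarrow> real) \<Rightarrow> bool" where
  "sq_query_wf Q \<longleftrightarrow> (\<forall>as. Q as \<in> borel_measurable borel \<and> (\<forall>w. Q as w \<in> {0..1}))"

definition vstat_transcript ::
  "'w measure \<Rightarrow> real \<Rightarrow> nat \<Rightarrow> (real list \<Rightarrow> 'w \<Rightarrow> real) \<Rightarrow> real list \<Rightarrow> bool" where
  "vstat_transcript D n k Q as \<longleftrightarrow> length as = k \<and>
     (\<forall>i<k. vstat_answer D n (Q (take i as)) (as ! i))"

definition solves_lq_mean_est ::
  "real \<Rightarrow> real \<Rightarrow> real \<Rightarrow> nat \<Rightarrow> (real list \<Rightarrow> real ^ 'n \<Rightarrow> real) \<Rightarrow> (real list \<Rightarrow> real ^ 'n) \<Rightarrow> bool" where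
  "solves_lq_mean_est q eps n k Q out \<longleftrightarrow> sq_query_wf Q \<and>
     (\<forall>D::(real ^ 'n) measure. dist_on_lq_ball q D \<longrightarrow>
        (\<forall>as. vstat_transcript D n k Q as \<longrightarrow>
           lq_norm q (out as - (\<integral>w. w \<partial>D)) \<le> eps))"

end

theory Submission
  imports Defs
begin

text \<open>Split every coordinate of \<open>w\<close> into its positive and negative part, and each part into
  \<open>M = \<lfloor>log\<^sub>2 d\<rfloor>\<close> dyadic levels rescaled into \<open>[0, 1]\<close>; the mean is then a
  \<open>2\<^sup>-\<^sup>j\<close>-weighted combination of the \<open>2dM\<close> level means, each estimated by one query.
  Answers below \<open>2/n\<close> are rounded to \<open>0\<close>; then a query of mean \<open>p\<close> is answered with
  error \<open>e\<close> satisfying \<open>e\<^sup>q \<le> 4\<^sup>q\<^sup>-\<^sup>1 p n\<^sup>1\<^sup>-\<^sup>q\<close>. By the power mean inequality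
  the \<open>q\<close>-th power of the error in one coordinate is at most \<open>(2M)\<^sup>q\<^sup>-\<^sup>1\<close> times the
  sum of these bounds over its \<open>2M\<close> queries, and since a point of the unit \<open>\<ell>\<^sub>q\<close> ball
  has at most \<open>2\<^sup>(\<^sup>j\<^sup>+\<^sup>1\<^sup>)\<^sup>q\<close> coordinates reaching level \<open>j\<close>, every level contributes
  \<open>O(n\<^sup>1\<^sup>-\<^sup>q)\<close> in total. Hence the \<open>q\<close>-th power of the \<open>\<ell>\<^sub>q\<close> error is
  \<open>O(M\<^sup>q n\<^sup>1\<^sup>-\<^sup>q)\<close>, which is at most \<open>\<epsilon>\<^sup>q\<close> for \<open>n = (16 log\<^sub>2 d / \<epsilon>)\<^sup>p\<close>.\<close>

section \<open>Thresholded VSTAT answers\<close>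

definition vstat_threshold :: "real \<Rightarrow> real \<Rightarrow> real" where
  "vstat_threshold n v = (if 2 / n \<le> v then v else 0)"

lemma inverse_le_sqrt_div_iff:
  fixes n p :: real
  assumes "n > 0" "p \<ge> 0"
  shows "1 / n \<le> sqrt (p / n) \<longleftrightarrow> 1 / n \<le> p"
proof -
  have "1 / n \<le> sqrt (p / n) \<longleftrightarrow> (1 / n)\<^sup>2 \<le> p / n"
  proof
    assume "1 / n \<le> sqrt (p / n)"
    then have "(1 / n)\<^sup>2 \<le> (sqrt (p / n))\<^sup>2" using assms by (intro power_mono) auto
    then show "(1 / n)\<^sup>2 \<le> p / n" using assms by simp
  qed (rule real_le_rsqrt)
  also have "\<dots> \<longleftrightarrow> 1 / n \<le> p"
    using assms by (simp add: power2_eq_square divide_simps)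
  finally show ?thesis .
qed

lemma powr_le_of_le_div:
  fixes p c n q :: real
  assumes "0 < p" "p \<le> c / n" "n > 0" "q \<ge> 1"
  shows "p powr q \<le> c powr (q - 1) * p * n powr (1 - q)"
proof -
  have "p powr q = p * p powr (q - 1)" using assms by (simp add: powr_mult_base)
  also have "p powr (q - 1) \<le> (c / n) powr (q - 1)"
    using assms by (intro powr_mono2) auto
  also have "(c / n) powr (q - 1) = c powr (q - 1) * n powr (1 - q)"
    using assms powr_minus_divide[of n "q - 1"] by (simp add: powr_divide)
  finally show ?thesis using assms by (simp add: mult_left_mono mult_ac)
qed

lemma sqrt_div_powr_le:
  fixes p n q :: real
  assumes "n > 0" "1 / n \<le> p" "0 < q" "q \<le> 2"
  shows "sqrt (p / n) powr q \<le> p * n powr (1 - q)"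
proof -
  have p: "p > 0" using assms by (meson divide_pos_pos less_le_trans zero_less_one)
  have "sqrt (p / n) powr q = p powr (q / 2) / n powr (q / 2)"
    using p assms by (simp add: powr_half_sqrt[symmetric] powr_powr powr_divide)
  also have "p powr (q / 2) = p * p powr (q / 2 - 1)"
    using p powr_mult_base[of p "q / 2 - 1"] by simp
  also have "p * p powr (q / 2 - 1) / n powr (q / 2) \<le> p * (1 / n) powr (q / 2 - 1) / n powr (q / 2)"
    using p assms by (intro divide_right_mono mult_left_mono powr_mono2') auto
  also have "p * (1 / n) powr (q / 2 - 1) / n powr (q / 2) = p * n powr (1 - q)"
  proof -
    have "(1 / n) powr (q / 2 - 1) = 1 / n powr (q / 2 - 1)"
      using assms by (simp add: powr_divide)
    moreover have "n powr (q / 2 - 1) * n powr (q / 2) = n powr (q - 1)"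
      using assms by (simp add: powr_add[symmetric])
    moreover have "n powr (1 - q) = 1 / n powr (q - 1)"
      using powr_minus_divide[of n "q - 1"] by simp
    ultimately show ?thesis by simp
  qed
  finally show ?thesis .
qed

text \<open>Thresholding at \<open>2/n\<close> makes the \<open>q\<close>-th power of the error proportional to \<open>p\<close>,
  not to \<open>1/n\<close>; this is what makes the errors of all queries summable against the \<open>\<ell>\<^sub>q\<close> constraint.\<close>

lemma vstat_threshold_error_powr:
  fixes q n p v :: real
  assumes q: "1 < q" "q < 2" and n: "n > 0" and p: "0 \<le> p" "p \<le> 1"
    and v: "\<bar>v - p\<bar> \<le> max (1 / n) (sqrt (p * (1 - p) / n))"
  shows "\<bar>vstat_threshold n v - p\<bar> powr q \<le> 4 powr (q - 1) * p * n powr (1 - q)"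
proof -
  have "sqrt (p * (1 - p) / n) \<le> sqrt (p / n)"
    using p n by (intro real_sqrt_le_mono divide_right_mono) (auto simp: mult_left_le)
  then have v': "\<bar>v - p\<bar> \<le> max (1 / n) (sqrt (p / n))" using v by linarith
  have four: "1 \<le> 4 powr (q - 1)" using q by (intro ge_one_powr_ge_zero) auto
  show ?thesis
  proof (cases "2 / n \<le> v")
    case True
    have pn: "1 / n \<le> p"
    proof (rule ccontr)
      assume "\<not> 1 / n \<le> p"
      then have "sqrt (p / n) < 1 / n" using inverse_le_sqrt_div_iff[OF n p(1)] by linarith
      then show False using v' True \<open>\<not> 1 / n \<le> p\<close> by linarith
    qed
    then have "\<bar>v - p\<bar> \<le> sqrt (p / n)" using v' inverse_le_sqrt_div_iff[OF n p(1)] by linarith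
    then have "\<bar>vstat_threshold n v - p\<bar> powr q \<le> sqrt (p / n) powr q"
      using True q by (auto simp: vstat_threshold_def intro!: powr_mono2)
    also have "\<dots> \<le> p * n powr (1 - q)"
      using n pn q by (intro sqrt_div_powr_le) auto
    also have "\<dots> \<le> 4 powr (q - 1) * p * n powr (1 - q)"
      using four p by (intro mult_right_mono) (auto simp: mult_le_cancel_right1)
    finally show ?thesis .
  next
    case False
    then have thr: "vstat_threshold n v = 0" by (simp add: vstat_threshold_def)
    have "p \<le> 4 / n"
    proof (cases "1 / n \<le> p")
      case True
      then have "p < 2 / n + sqrt (p / n)"
        using v' False inverse_le_sqrt_div_iff[OF n p(1)] by linarith
      show ?thesis
      proof (rule ccontr)
        assume "\<not> p \<le> 4 / n"
        then have "4 / n \<le> p" by simp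
        then have "p * (4 / n) \<le> p * p" using p by (intro mult_left_mono) auto
        then have "p / n \<le> (p / 2)\<^sup>2" by (simp add: power2_eq_square)
        then have "sqrt (p / n) \<le> sqrt ((p / 2)\<^sup>2)" by (rule real_sqrt_le_mono)
        then have "sqrt (p / n) \<le> p / 2" using p by simp
        then show False using \<open>p < 2 / n + sqrt (p / n)\<close> \<open>\<not> p \<le> 4 / n\<close> by linarith
      qed
    qed (use n in \<open>simp add: divide_simps\<close>)
    then show ?thesis
      using powr_le_of_le_div[of p 4 n q] thr p n q by (cases "p = 0") auto
  qed
qed

section \<open>A power mean inequality\<close>

lemma sum_powr_le_card_powr_sum_pos:
  fixes a :: "'a \<Rightarrow> real"
  assumes "finite S" "S \<noteq> {}" "\<And>i. i \<in> S \<Longrightarrow> a i > 0" "q \<ge> 1"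
  shows "(\<Sum>i\<in>S. a i) powr q \<le> real (card S) powr (q - 1) * (\<Sum>i\<in>S. a i powr q)"
proof -
  define K where "K = real (card S)"
  have K: "K > 0" using assms by (simp add: K_def card_gt_0_iff)
  have "(\<lambda>x::real. x powr q) (\<Sum>i\<in>S. (1 / K) *\<^sub>R a i) \<le> (\<Sum>i\<in>S. (1 / K) * (a i powr q))"
    by (rule convex_on_sum[OF assms(1,2) powr_convex[OF assms(4)]])
       (use assms K in \<open>auto simp: K_def\<close>)
  then have "((\<Sum>i\<in>S. a i) / K) powr q \<le> (\<Sum>i\<in>S. a i powr q) / K"
    by (simp add: sum_divide_distrib[symmetric] sum_distrib_left[symmetric] divide_inverse mult.commute)
  moreover have "((\<Sum>i\<in>S. a i) / K) powr q = (\<Sum>i\<in>S. a i) powr q / K powr q"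
    using assms K by (simp add: powr_divide sum_nonneg less_imp_le)
  ultimately have "(\<Sum>i\<in>S. a i) powr q \<le> K powr q * ((\<Sum>i\<in>S. a i powr q) / K)"
    using K by (simp add: divide_simps mult.commute)
  also have "K powr q = K powr (q - 1) * K"
    using K powr_add[of K "q - 1" 1] by simp
  finally show ?thesis using K by (simp add: K_def)
qed

lemma sum_powr_le_card_powr_sum:
  fixes a :: "'a \<Rightarrow> real"
  assumes "finite S" "\<And>i. i \<in> S \<Longrightarrow> a i \<ge> 0" "q \<ge> 1"
  shows "(\<Sum>i\<in>S. a i) powr q \<le> real (card S) powr (q - 1) * (\<Sum>i\<in>S. a i powr q)"
proof -
  define S' where "S' = {i\<in>S. a i > 0}"
  have S': "finite S'" "S' \<subseteq> S" using assms by (auto simp: S'_def)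
  have sum_S': "(\<Sum>i\<in>S. f i) = (\<Sum>i\<in>S'. f i)" if "\<And>i. f i = 0 \<longleftrightarrow> a i = 0" for f :: "'a \<Rightarrow> real"
    using assms that by (intro sum.mono_neutral_right) (auto simp: S'_def less_le)
  have sums: "(\<Sum>i\<in>S. a i) = (\<Sum>i\<in>S'. a i)" "(\<Sum>i\<in>S. a i powr q) = (\<Sum>i\<in>S'. a i powr q)"
    by (rule sum_S', simp)+
  show ?thesis
  proof (cases "S' = {}")
    case True then show ?thesis using sums assms by simp
  next
    case False
    have "(\<Sum>i\<in>S'. a i) powr q \<le> real (card S') powr (q - 1) * (\<Sum>i\<in>S'. a i powr q)"
      using sum_powr_le_card_powr_sum_pos[OF S'(1) False, of a q] assms by (auto simp: S'_def)
    also have "\<dots> \<le> real (card S) powr (q - 1) * (\<Sum>i\<in>S'. a i powr q)"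
      using assms S' False
      by (intro mult_right_mono powr_mono2 sum_nonneg) (auto intro: card_mono card_gt_0_iff[THEN iffD2])
    finally show ?thesis using sums by simp
  qed
qed

lemma abs_weighted_sum_diff_powr_le:
  fixes a b p r c :: "nat \<Rightarrow> real"
  assumes q: "q \<ge> 1" and c: "\<And>j. 0 \<le> c j"
    and a: "\<And>j. j < M \<Longrightarrow> \<bar>a j - p j\<bar> powr q \<le> C * p j"
    and b: "\<And>j. j < M \<Longrightarrow> \<bar>b j - r j\<bar> powr q \<le> C * r j"
  shows "\<bar>(\<Sum>j<M. c j * (a j - b j)) - (\<Sum>j<M. c j * (p j - r j))\<bar> powr q
           \<le> (2 * real M) powr (q - 1) * C * (\<Sum>j<M. c j powr q * (p j + r j))"
proof -
  define S where "S = {..<M} \<times> (UNIV :: bool set)"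
  define t where "t x = c (fst x) * (if snd x then \<bar>a (fst x) - p (fst x)\<bar> else \<bar>b (fst x) - r (fst x)\<bar>)" for x
  have sum_S: "(\<Sum>x\<in>S. g x) = (\<Sum>j<M. g (j, True) + g (j, False))" for g :: "nat \<times> bool \<Rightarrow> real"
  proof -
    have "(\<Sum>j<M. \<Sum>\<beta>\<in>(UNIV::bool set). g (j, \<beta>)) = (\<Sum>x\<in>S. g x)"
      unfolding S_def by (simp add: sum.cartesian_product case_prod_beta')
    then show ?thesis by (simp add: UNIV_bool add.commute)
  qed
  have "\<bar>(\<Sum>j<M. c j * (a j - b j)) - (\<Sum>j<M. c j * (p j - r j))\<bar>
      = \<bar>\<Sum>j<M. c j * (a j - p j) - c j * (b j - r j)\<bar>"
    by (simp add: sum_subtractf[symmetric] algebra_simps)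
  also have "\<dots> \<le> (\<Sum>j<M. \<bar>c j * (a j - p j) - c j * (b j - r j)\<bar>)" by (rule sum_abs)
  also have "\<dots> \<le> (\<Sum>x\<in>S. t x)"
    unfolding sum_S t_def using c
    by (intro sum_mono order.trans[OF abs_triangle_ineq4]) (simp add: abs_mult)
  finally have "\<bar>(\<Sum>j<M. c j * (a j - b j)) - (\<Sum>j<M. c j * (p j - r j))\<bar> powr q \<le> (\<Sum>x\<in>S. t x) powr q"
    using q by (intro powr_mono2) auto
  also have "\<dots> \<le> real (card S) powr (q - 1) * (\<Sum>x\<in>S. t x powr q)"
    using q c by (intro sum_powr_le_card_powr_sum) (auto simp: S_def t_def)
  also have "(\<Sum>x\<in>S. t x powr q) \<le> C * (\<Sum>j<M. c j powr q * (p j + r j))"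
  proof -
    have "(\<Sum>x\<in>S. t x powr q) \<le> (\<Sum>x\<in>S. c (fst x) powr q * (C * (if snd x then p (fst x) else r (fst x))))"
    proof (rule sum_mono)
      fix x assume "x \<in> S"
      then show "t x powr q \<le> c (fst x) powr q * (C * (if snd x then p (fst x) else r (fst x)))"
        using a[of "fst x"] b[of "fst x"] c[of "fst x"]
        by (auto simp: S_def t_def powr_mult intro: mult_left_mono)
    qed
    also have "\<dots> = C * (\<Sum>j<M. c j powr q * (p j + r j))"
      by (simp add: sum_S sum_distrib_left algebra_simps sum.distrib)
    finally show ?thesis .
  qed
  finally show ?thesis
    by (simp add: S_def card_cartesian_product mult_left_mono mult.assoc mult.commute[of "real M"])
qed

section \<open>Dyadic levels\<close>

text \<open>Level \<open>j\<close> of \<open>x \<ge> 0\<close> is the part of \<open>min x 1\<close> lying in the dyadic shell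
  \<open>(2 ^ -(j + 1), 2 ^ -j]\<close>, rescaled by \<open>2\<^sup>j\<close> into \<open>[0, 1]\<close>; the last level \<open>M - 1\<close> also absorbs
  everything below it, so the levels telescope to \<open>min x 1\<close>.\<close>

definition dyadic_level :: "nat \<Rightarrow> nat \<Rightarrow> real \<Rightarrow> real" where
  "dyadic_level M j x =
     (min x ((1/2)^j) - (if Suc j < M then min x ((1/2)^Suc j) else 0)) * 2^j"

lemma dyadic_level_nonneg:
  assumes "0 \<le> x" shows "0 \<le> dyadic_level M j x"
proof -
  have "min x ((1/2::real)^Suc j) \<le> min x ((1/2)^j)"
    by (intro min.mono) (simp_all add: power_le_imp_le_exp)
  then show ?thesis using assms by (auto simp: dyadic_level_def)
qed

lemma dyadic_level_le_1:
  assumes "0 \<le> x" shows "dyadic_level M j x \<le> 1"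
proof -
  have "0 \<le> (if Suc j < M then min x ((1/2::real)^Suc j) else 0)" "min x ((1/2::real)^j) \<le> (1/2)^j"
    using assms by auto
  then have "min x ((1/2)^j) - (if Suc j < M then min x ((1/2)^Suc j) else 0) \<le> (1/2::real)^j"
    by linarith
  then have "dyadic_level M j x \<le> (1/2)^j * 2^j"
    unfolding dyadic_level_def by (rule mult_right_mono) simp
  then show ?thesis by (simp add: power_mult_distrib[symmetric])
qed

lemma dyadic_level_pos_part_add_neg_part:
  "dyadic_level M j (max 0 x) + dyadic_level M j (max 0 (- x)) = dyadic_level M j \<bar>x\<bar>"
  by (cases "x \<ge> 0") (auto simp: max_def dyadic_level_def)

lemma sum_dyadic_level:
  assumes "0 < M"
  shows "(\<Sum>j<M. (1/2)^j * dyadic_level M j x) = min x 1"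
proof -
  obtain m where M: "M = Suc m" using assms by (cases M) auto
  have "(\<Sum>j<M. (1/2)^j * dyadic_level M j x)
      = (\<Sum>j<Suc m. min x ((1/2)^j)) - (\<Sum>j<Suc m. if Suc j < Suc m then min x ((1/2::real)^Suc j) else 0)"
  proof -
    have "(1/2::real)^j * dyadic_level M j x = min x ((1/2)^j) - (if Suc j < M then min x ((1/2)^Suc j) else 0)" for j
      by (simp add: dyadic_level_def power_mult_distrib[symmetric])
    then show ?thesis by (simp only: M sum_subtractf)
  qed
  also have "(\<Sum>j<Suc m. if Suc j < Suc m then min x ((1/2::real)^Suc j) else 0) = (\<Sum>j<m. min x ((1/2)^Suc j))"
    by (simp add: sum.lessThan_Suc)
  also have "(\<Sum>j<Suc m. min x ((1/2::real)^j)) = min x 1 + (\<Sum>j<m. min x ((1/2)^Suc j))"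
    by (subst sum.lessThan_Suc_shift) simp
  finally show ?thesis by simp
qed

lemma dyadic_level_le_powr:
  assumes "0 \<le> x" "Suc j < M" "q > 0"
  shows "dyadic_level M j x \<le> (2^Suc j * min x 1) powr q"
proof (cases "x \<le> (1/2)^Suc j")
  case True
  have "((1::real)/2)^Suc j \<le> (1/2)^j" by (simp add: power_le_imp_le_exp)
  with True assms have "dyadic_level M j x = 0" by (simp add: dyadic_level_def)
  then show ?thesis by simp
next
  case False
  have "1 < 2^Suc j * min x 1"
  proof (cases "x \<le> 1")
    case True
    then have "2^Suc j * (1/2)^Suc j < 2^Suc j * x" using False by simp
    then show ?thesis using True by (simp add: power_mult_distrib[symmetric])
  next
    case False
    have "(1::real) < 2^Suc j" by (rule one_less_power) auto
    then show ?thesis using False by simp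
  qed
  then have "1 \<le> (2^Suc j * min x 1) powr q" using assms by (intro ge_one_powr_ge_zero) auto
  then show ?thesis using dyadic_level_le_1[OF assms(1), of M j] by linarith
qed

lemma lq_norm_le_1_imp_sum_powr_le_1:
  assumes "lq_norm q w \<le> 1" "q > 0"
  shows "(\<Sum>i\<in>UNIV. \<bar>w $ i\<bar> powr q) \<le> 1"
proof (rule ccontr)
  assume "\<not> (\<Sum>i\<in>UNIV. \<bar>w $ i\<bar> powr q) \<le> 1"
  then have "1 < (\<Sum>i\<in>UNIV. \<bar>w $ i\<bar> powr q) powr (1 / q)" using assms by (intro gr_one_powr) auto
  then show False using assms by (simp add: lq_norm_def)
qed

lemma lq_norm_le_1_imp_abs_le_1:
  assumes "lq_norm q w \<le> 1" "q > 0"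
  shows "\<bar>w $ i\<bar> \<le> 1"
proof (rule ccontr)
  assume "\<not> \<bar>w $ i\<bar> \<le> 1"
  then have "1 < \<bar>w $ i\<bar> powr q" using assms by (intro gr_one_powr) auto
  also have "\<dots> \<le> (\<Sum>i\<in>UNIV. \<bar>w $ i\<bar> powr q)" by (rule member_le_sum) auto
  finally show False using lq_norm_le_1_imp_sum_powr_le_1[OF assms] by simp
qed

definition level_query :: "nat \<Rightarrow> 'i \<Rightarrow> bool \<Rightarrow> nat \<Rightarrow> real ^ 'i \<Rightarrow> real" where
  "level_query M i b j w = dyadic_level M j (max 0 ((if b then 1 else -1) * w $ i))"

lemma level_query_measurable [measurable]: "level_query M i b j \<in> borel_measurable borel"
  unfolding level_query_def dyadic_level_def by measurable

lemma level_query_nonneg: "0 \<le> level_query M i b j w"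
  by (simp add: level_query_def dyadic_level_nonneg)

lemma level_query_le_1: "level_query M i b j w \<le> 1"
  by (simp add: level_query_def dyadic_level_le_1)

lemma level_query_pair: "level_query M i True j w + level_query M i False j w = dyadic_level M j \<bar>w $ i\<bar>"
  using dyadic_level_pos_part_add_neg_part[of M j "w $ i"] by (simp add: level_query_def)

lemma sum_level_query_diff:
  assumes "0 < M" "\<bar>w $ i\<bar> \<le> 1"
  shows "(\<Sum>j<M. (1/2)^j * (level_query M i True j w - level_query M i False j w)) = w $ i"
proof -
  have "(\<Sum>j<M. (1/2)^j * (level_query M i True j w - level_query M i False j w))
      = (\<Sum>j<M. (1/2)^j * dyadic_level M j (max 0 (w $ i))) - (\<Sum>j<M. (1/2)^j * dyadic_level M j (max 0 (- w $ i)))"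
    by (simp add: level_query_def right_diff_distrib sum_subtractf)
  also have "\<dots> = w $ i" using assms by (auto simp: sum_dyadic_level max_def min_def)
  finally show ?thesis .
qed

lemma last_level_scale_le:
  fixes q d :: real
  assumes q: "q > 1" and d: "2 \<le> d" and M: "M \<ge> 1" and dM: "d < 2 * 2^M"
  shows "((1/2)^(M - 1)) powr q * d \<le> 2 * 2 powr q"
proof -
  have "(1/2::real)^(M - 1) = 2 / 2^M"
    using M by (cases M) (auto simp: power_divide)
  also have "\<dots> \<le> 4 / d" using dM d by (simp add: divide_simps)
  finally have "((1/2)^(M - 1)) powr q * d \<le> (4 / d) powr q * d"
    using d q by (intro mult_right_mono powr_mono2) auto
  also have "(4 / d) powr q * d = 4 powr q * d powr (1 - q)"
    using d by (simp add: powr_divide powr_diff)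
  also have "\<dots> \<le> 4 powr q * 2 powr (1 - q)"
    using d q by (intro mult_left_mono powr_mono2') auto
  also have "4 powr q * 2 powr (1 - q) = 2 * 2 powr q"
  proof -
    have "(4::real) powr q = 2 powr q * 2 powr q" by (simp add: powr_mult[symmetric])
    moreover have "(2::real) powr q * 2 powr (1 - q) = 2" by (simp add: powr_add[symmetric])
    ultimately show ?thesis by (simp add: mult_ac)
  qed
  finally show ?thesis .
qed

context
  fixes q :: real and D :: "(real ^ 'i) measure"
  assumes D: "dist_on_lq_ball q D" and q: "q > 0"
begin

interpretation prob_space D using D by (simp add: dist_on_lq_ball_def)

private lemma sets_eq_borel: "sets D = sets borel" using D by (simp add: dist_on_lq_ball_def)

private lemma AE_lq_norm_le_1: "AE w in D. lq_norm q w \<le> 1" using D by (simp add: dist_on_lq_ball_def)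

private lemma measurable_from_borel: "f \<in> borel_measurable borel \<Longrightarrow> f \<in> borel_measurable D"
  by (subst measurable_cong_sets[OF sets_eq_borel refl])

lemma integrable_level_query: "integrable D (level_query M i b j)"
  by (rule integrable_const_bound[where B = 1])
     (auto intro!: measurable_from_borel simp: abs_le_iff level_query_le_1 level_query_nonneg)

lemma integrable_dyadic_level_abs: "integrable D (\<lambda>w. dyadic_level M j \<bar>w $ i\<bar>)"
  by (simp add: integrable_level_query flip: level_query_pair)

lemma integral_level_query_bounds:
  "0 \<le> (\<integral>w. level_query M i b j w \<partial>D)" "(\<integral>w. level_query M i b j w \<partial>D) \<le> 1"
proof -
  show "0 \<le> (\<integral>w. level_query M i b j w \<partial>D)"
    by (rule integral_nonneg_AE) (simp add: level_query_nonneg)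
  have "(\<integral>w. level_query M i b j w \<partial>D) \<le> (\<integral>w. 1 \<partial>D)"
    by (rule integral_mono_AE[OF integrable_level_query]) (auto simp: level_query_le_1)
  then show "(\<integral>w. level_query M i b j w \<partial>D) \<le> 1" by (simp add: prob_space)
qed

lemma mean_eq_sum_level_integrals:
  assumes "0 < M"
  shows "(\<integral>w. w \<partial>D) $ i =
    (\<Sum>j<M. (1/2)^j * ((\<integral>w. level_query M i True j w \<partial>D) - (\<integral>w. level_query M i False j w \<partial>D)))"
proof -
  have "integrable D (\<lambda>w. w)"
  proof (rule integrable_const_bound[where B = "real CARD('i)"])
    show "AE w in D. norm w \<le> real CARD('i)"
      using AE_lq_norm_le_1
    proof eventually_elim
      case (elim w)
      have "norm w \<le> (\<Sum>i\<in>UNIV. \<bar>w $ i\<bar>)" by (rule norm_le_l1_cart)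
      also have "\<dots> \<le> (\<Sum>i\<in>(UNIV::'i set). 1)"
        by (rule sum_mono) (rule lq_norm_le_1_imp_abs_le_1[OF elim q])
      finally show ?case by simp
    qed
  qed (intro measurable_from_borel, simp)
  then have "(\<integral>w. w \<partial>D) $ i = (\<integral>w. w $ i \<partial>D)"
    using integral_bounded_linear[OF bounded_linear_vec_nth, of D "\<lambda>w. w" i] by simp
  also have "\<dots> = (\<integral>w. (\<Sum>j<M. (1/2)^j * (level_query M i True j w - level_query M i False j w)) \<partial>D)"
  proof (rule integral_cong_AE)
    show "AE w in D. w $ i = (\<Sum>j<M. (1/2)^j * (level_query M i True j w - level_query M i False j w))"
      using AE_lq_norm_le_1
    proof eventually_elim
      case (elim w)
      show ?case using sum_level_query_diff[OF assms lq_norm_le_1_imp_abs_le_1[OF elim q]] by simp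
    qed
  qed (auto intro!: measurable_from_borel)
  also have "\<dots> = (\<Sum>j<M. (1/2)^j * ((\<integral>w. level_query M i True j w \<partial>D) - (\<integral>w. level_query M i False j w \<partial>D)))"
    by (simp add: integrable_level_query)
  finally show ?thesis .
qed

text \<open>A coordinate of absolute value at most \<open>2 ^ -(j + 1)\<close> has level \<open>j\<close> zero, and the others
  are paid for by their share \<open>\<bar>w $ i\<bar> powr q\<close> of the \<open>\<ell>\<^sub>q\<close> constraint; the last level
  has no such cut-off and is only bounded by the dimension.\<close>

lemma sum_integral_level_query_le:
  "(\<Sum>i\<in>UNIV. (\<integral>w. level_query M i True j w \<partial>D) + (\<integral>w. level_query M i False j w \<partial>D))
     \<le> (if Suc j < M then (2^Suc j) powr q else real CARD('i))"
proof -
  let ?B = "if Suc j < M then (2^Suc j) powr q else real CARD('i)"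
  have "(\<Sum>i\<in>UNIV. (\<integral>w. level_query M i True j w \<partial>D) + (\<integral>w. level_query M i False j w \<partial>D))
      = (\<integral>w. (\<Sum>i\<in>UNIV. dyadic_level M j \<bar>w $ i\<bar>) \<partial>D)"
    by (simp add: integrable_level_query integrable_dyadic_level_abs level_query_pair
        Bochner_Integration.integral_sum flip: Bochner_Integration.integral_add)
  also have "\<dots> \<le> (\<integral>w. ?B \<partial>D)"
  proof (rule integral_mono_AE)
    show "integrable D (\<lambda>w. \<Sum>i\<in>UNIV. dyadic_level M j \<bar>w $ i\<bar>)"
      by (simp add: integrable_dyadic_level_abs)
    show "AE w in D. (\<Sum>i\<in>UNIV. dyadic_level M j \<bar>w $ i\<bar>) \<le> ?B"
      using AE_lq_norm_le_1
    proof eventually_elim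
      case (elim w)
      show ?case
      proof (cases "Suc j < M")
        case True
        have "(\<Sum>i\<in>UNIV. dyadic_level M j \<bar>w $ i\<bar>) \<le> (\<Sum>i\<in>UNIV. (2^Suc j * min \<bar>w $ i\<bar> 1) powr q)"
          by (rule sum_mono) (rule dyadic_level_le_powr[OF _ True q], simp)
        also have "\<dots> = (2^Suc j) powr q * (\<Sum>i\<in>UNIV. (min \<bar>w $ i\<bar> 1) powr q)"
          by (simp add: powr_mult sum_distrib_left)
        also have "(\<Sum>i\<in>UNIV. (min \<bar>w $ i\<bar> 1) powr q) \<le> (\<Sum>i\<in>UNIV. \<bar>w $ i\<bar> powr q)"
          by (rule sum_mono) (rule powr_mono2, use q in auto)
        also have "\<dots> \<le> 1" by (rule lq_norm_le_1_imp_sum_powr_le_1[OF elim q])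
        finally show ?thesis using True by simp
      next
        case False
        have "(\<Sum>i\<in>UNIV. dyadic_level M j \<bar>w $ i\<bar>) \<le> (\<Sum>i\<in>(UNIV::'i set). 1)"
          by (rule sum_mono) (rule dyadic_level_le_1, simp)
        then show ?thesis using False by simp
      qed
    qed
  qed simp
  also have "\<dots> = ?B" by (simp add: prob_space)
  finally show ?thesis .
qed

lemma scaled_sum_integral_level_query_le:
  assumes "1 < q" "2 \<le> CARD('i)" "real CARD('i) < 2 * 2^M" "j < M"
  shows "((1/2)^j) powr q * (\<Sum>i\<in>UNIV. (\<integral>w. level_query M i True j w \<partial>D) + (\<integral>w. level_query M i False j w \<partial>D))
           \<le> 2 * 2 powr q"
proof -
  have "((1/2)^j) powr q * (\<Sum>i\<in>UNIV. (\<integral>w. level_query M i True j w \<partial>D) + (\<integral>w. level_query M i False j w \<partial>D))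
      \<le> ((1/2)^j) powr q * (if Suc j < M then (2^Suc j) powr q else real CARD('i))"
    by (intro mult_left_mono sum_integral_level_query_le) simp
  also have "\<dots> \<le> 2 * 2 powr q"
  proof (cases "Suc j < M")
    case True
    have "((1/2::real)^j) powr q * (2^Suc j) powr q = ((1/2)^j * 2^Suc j) powr q"
      by (simp add: powr_mult)
    also have "(1/2::real)^j * 2^Suc j = 2" by (simp add: power_mult_distrib[symmetric] power_one_over)
    finally show ?thesis using True by simp
  next
    case False
    then have "j = M - 1" using assms by simp
    then show ?thesis using False last_level_scale_le[of q "real CARD('i)" M] assms by simp
  qed
  finally show ?thesis .
qed

end

section \<open>The level-query algorithm\<close>

text \<open>With \<open>h\<close> an injective numbering of the coordinates, the answer to
  \<open>level_query M i b j\<close> is stored at position \<open>level_index h M i b j\<close> of the transcript.\<close>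

definition level_index :: "('i \<Rightarrow> nat) \<Rightarrow> nat \<Rightarrow> 'i \<Rightarrow> bool \<Rightarrow> nat \<Rightarrow> nat" where
  "level_index h M i b j = (2 * h i + (if b then 1 else 0)) * M + j"

definition level_queries :: "('i \<Rightarrow> nat) \<Rightarrow> nat \<Rightarrow> real list \<Rightarrow> real ^ 'i \<Rightarrow> real" where
  "level_queries h M as =
     (let k = length as div M in level_query M (inv h (k div 2)) (odd k) (length as mod M))"

definition level_estimate :: "('i \<Rightarrow> nat) \<Rightarrow> nat \<Rightarrow> real \<Rightarrow> real list \<Rightarrow> real ^ 'i" where
  "level_estimate h M n as = (\<chi> i. \<Sum>j<M. (1/2)^j *
     (vstat_threshold n (as ! level_index h M i True j) - vstat_threshold n (as ! level_index h M i False j)))"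

lemma level_index_less:
  assumes "h i < CARD('i)" "j < M"
  shows "level_index h M (i :: 'i :: finite) b j < 2 * CARD('i) * M"
proof -
  have "level_index h M i b j < (2 * h i + (if b then 1 else 0) + 1) * M"
    using assms by (simp add: level_index_def)
  also have "\<dots> \<le> 2 * CARD('i) * M" using assms by (intro mult_right_mono) auto
  finally show ?thesis .
qed

lemma level_queries_at_index:
  assumes "inj h" "j < M" "length as = level_index h M i b j"
  shows "level_queries h M as = level_query M i b j"
proof -
  have "length as div M = 2 * h i + (if b then 1 else 0)" "length as mod M = j"
    using assms by (simp_all add: level_index_def)
  then show ?thesis using assms(1) by (simp add: level_queries_def Let_def)
qed

lemma sq_query_wf_level_queries: "sq_query_wf (level_queries (h :: 'i :: finite \<Rightarrow> nat) M)"
  by (simp add: sq_query_wf_def level_queries_def Let_def level_query_nonneg level_query_le_1)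

lemma transcript_level_error_powr:
  fixes D :: "(real ^ 'i) measure"
  assumes q: "1 < q" "q < 2" and D: "dist_on_lq_ball q D" and n: "n > 0"
    and h: "inj h" "\<And>i. h i < CARD('i)" and j: "j < M"
    and tr: "vstat_transcript D n (2 * CARD('i) * M) (level_queries h M) as"
  shows "\<bar>vstat_threshold n (as ! level_index h M i b j) - (\<integral>w. level_query M i b j w \<partial>D)\<bar> powr q
           \<le> 4 powr (q - 1) * (\<integral>w. level_query M i b j w \<partial>D) * n powr (1 - q)"
proof -
  have less: "level_index h M i b j < 2 * CARD('i) * M" by (rule level_index_less[OF h(2) j])
  then have "vstat_answer D n (level_queries h M (take (level_index h M i b j) as)) (as ! level_index h M i b j)"
    using tr by (simp add: vstat_transcript_def)
  moreover have "level_queries h M (take (level_index h M i b j) as) = level_query M i b j"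
    using tr less by (intro level_queries_at_index h j) (simp add: vstat_transcript_def)
  ultimately show ?thesis
    using q n integral_level_query_bounds[OF D, of M i b j]
    by (intro vstat_threshold_error_powr) (auto simp: vstat_answer_def Let_def)
qed

lemma level_estimate_solves:
  fixes h :: "'i :: finite \<Rightarrow> nat"
  assumes q: "1 < q" "q < 2" and \<epsilon>: "\<epsilon> > 0" and n: "n > 0" and M: "M \<ge> 1"
    and h: "inj h" "\<And>i. h i < CARD('i)"
    and d: "2 \<le> CARD('i)" "real CARD('i) < 2 * 2^M"
    and budget: "(2 * real M) powr (q - 1) * 4 powr (q - 1) * n powr (1 - q) * (real M * (2 * 2 powr q))
                   \<le> \<epsilon> powr q"
  shows "solves_lq_mean_est q \<epsilon> n (2 * CARD('i) * M) (level_queries h M) (level_estimate h M n)"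
  unfolding solves_lq_mean_est_def
proof (intro conjI allI impI sq_query_wf_level_queries)
  fix D :: "(real ^ 'i) measure" and as
  assume D: "dist_on_lq_ball q D" and tr: "vstat_transcript D n (2 * CARD('i) * M) (level_queries h M) as"
  define P where "P i b j = (\<integral>w. level_query M i b j w \<partial>D)" for i b j
  define C where "C = 4 powr (q - 1) * n powr (1 - q)"
  define e where "e i = \<bar>(level_estimate h M n as - (\<integral>w. w \<partial>D)) $ i\<bar>" for i
  have "e i powr q \<le> (2 * real M) powr (q - 1) * C * (\<Sum>j<M. ((1/2)^j) powr q * (P i True j + P i False j))" for i
  proof -
    have "e i = \<bar>(\<Sum>j<M. (1/2)^j * (vstat_threshold n (as ! level_index h M i True j)
                                    - vstat_threshold n (as ! level_index h M i False j)))
               - (\<Sum>j<M. (1/2)^j * (P i True j - P i False j))\<bar>"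
      using q M by (simp add: e_def level_estimate_def P_def mean_eq_sum_level_integrals[OF D, of M i])
    also have "\<dots> powr q \<le> (2 * real M) powr (q - 1) * C * (\<Sum>j<M. ((1/2)^j) powr q * (P i True j + P i False j))"
      using q transcript_level_error_powr[OF q D n h _ tr]
      by (intro abs_weighted_sum_diff_powr_le) (auto simp: P_def C_def mult_ac)
    finally show ?thesis .
  qed
  then have "(\<Sum>i\<in>UNIV. e i powr q)
      \<le> (\<Sum>i\<in>UNIV. (2 * real M) powr (q - 1) * C * (\<Sum>j<M. ((1/2)^j) powr q * (P i True j + P i False j)))"
    by (rule sum_mono)
  also have "\<dots> = (2 * real M) powr (q - 1) * C * (\<Sum>j<M. ((1/2)^j) powr q * (\<Sum>i\<in>UNIV. P i True j + P i False j))"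
  proof -
    have "(\<Sum>i\<in>UNIV. \<Sum>j<M. ((1/2::real)^j) powr q * (P i True j + P i False j))
        = (\<Sum>j<M. ((1/2)^j) powr q * (\<Sum>i\<in>UNIV. P i True j + P i False j))"
      by (subst sum.swap) (simp add: sum_distrib_left)
    then show ?thesis by (simp flip: sum_distrib_left)
  qed
  also have "\<dots> \<le> (2 * real M) powr (q - 1) * C * (\<Sum>j<M. 2 * 2 powr q)"
    using q D d unfolding P_def
    by (intro mult_left_mono sum_mono scaled_sum_integral_level_query_le) (auto simp: C_def)
  also have "\<dots> \<le> \<epsilon> powr q"
    using budget by (simp add: C_def mult_ac)
  finally have "(\<Sum>i\<in>UNIV. e i powr q) powr (1 / q) \<le> (\<epsilon> powr q) powr (1 / q)"
    using q by (intro powr_mono2) (auto intro: sum_nonneg)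
  then show "lq_norm q (level_estimate h M n as - (\<integral>w. w \<partial>D)) \<le> \<epsilon>"
    using q \<epsilon> by (simp add: lq_norm_def e_def powr_powr)
qed


lemma error_budget_le:
  fixes q \<epsilon> L M :: real
  assumes q: "q > 1" and \<epsilon>: "\<epsilon> > 0" and M: "1 \<le> M" "M \<le> L"
  shows "(2 * M) powr (q - 1) * 4 powr (q - 1) * ((16 * L / \<epsilon>) powr (q / (q - 1))) powr (1 - q)
           * (M * (2 * 2 powr q)) \<le> \<epsilon> powr q"
proof -
  have n: "((16 * L / \<epsilon>) powr (q / (q - 1))) powr (1 - q) = 1 / (16 * L / \<epsilon>) powr q"
  proof -
    have "q / (q - 1) * (1 - q) = - q" using q by (simp add: field_simps)
    then show ?thesis by (simp add: powr_powr powr_minus_divide)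
  qed
  have "(2 * M) powr (q - 1) * 4 powr (q - 1) * ((16 * L / \<epsilon>) powr (q / (q - 1))) powr (1 - q)
                     * (M * (2 * 2 powr q))
      = ((2 * M) powr (q - 1) * (2 * M)) * (4 powr (q - 1) * 4) * 2 powr q / (16 * L / \<epsilon>) powr q / 4"
    unfolding n by (simp add: field_simps)
  also have "\<dots> = (2 * M) powr q * 4 powr q * 2 powr q / (16 * L / \<epsilon>) powr q / 4"
    using M powr_add[of "2 * M" "q - 1" 1] powr_add[of 4 "q - 1" 1] by simp
  also have "(2 * M) powr q * 4 powr q * 2 powr q / (16 * L / \<epsilon>) powr q = (M * \<epsilon> / L) powr q"
  proof -
    have "(2 * M) powr q * 4 powr q * 2 powr q = (2 * M * 4 * 2) powr q"
      using M by (simp add: powr_mult[symmetric] mult_ac)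
    also have "\<dots> / (16 * L / \<epsilon>) powr q = (2 * M * 4 * 2 / (16 * L / \<epsilon>)) powr q"
      using M \<epsilon> by (intro powr_divide[symmetric])
    also have "2 * M * 4 * 2 / (16 * L / \<epsilon>) = M * \<epsilon> / L" using M by (simp add: field_simps)
    finally show ?thesis .
  qed
  also have "(M * \<epsilon> / L) powr q / 4 \<le> (M * \<epsilon> / L) powr q" by simp
  also have "\<dots> \<le> \<epsilon> powr q"
    using M \<epsilon> q by (intro powr_mono2) (auto simp: divide_simps mult_right_mono)
  finally show ?thesis .
qed

lemma less_two_mul_two_pow_nat_floor_log:
  fixes x :: real
  assumes "1 \<le> x"
  shows "x < 2 * 2 ^ nat \<lfloor>log 2 x\<rfloor>"
proof -
  define m where "m = nat \<lfloor>log 2 x\<rfloor>"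
  have "log 2 x < real m + 1" using assms by (simp add: m_def)
  then have "2 powr log 2 x < 2 powr (real m + 1)" by simp
  moreover have "(2::real) powr (real m + 1) = 2 * 2 ^ m" by (simp add: powr_add powr_realpow)
  ultimately show ?thesis using assms by (simp add: m_def)
qed

theorem theorem3p15:
  fixes q \<epsilon> :: real
  assumes "1 < q" "q < 2" and "\<epsilon> > 0" and "CARD('n) \<ge> 2"
  shows "\<exists>k Q (out :: real list \<Rightarrow> real ^ 'n).
           real k \<le> 2 * real CARD('n) * log 2 (real CARD('n)) \<and>
           solves_lq_mean_est q \<epsilon> ((16 * log 2 (real CARD('n)) / \<epsilon>) powr (q / (q - 1))) k Q out"
proof -
  define L where "L = log 2 (real CARD('n))"
  define M where "M = nat \<lfloor>L\<rfloor>"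
  define n where "n = (16 * L / \<epsilon>) powr (q / (q - 1))"
  have L: "1 \<le> L" using assms(4) by (simp add: L_def)
  have M: "1 \<le> M" "real M \<le> L" using L by (simp_all add: M_def le_nat_floor)
  have d: "real CARD('n) < 2 * 2^M"
    using less_two_mul_two_pow_nat_floor_log[of "real CARD('n)"] assms(4) by (simp add: M_def L_def)
  obtain h :: "'n \<Rightarrow> nat" where h: "bij_betw h UNIV {0..<CARD('n)}"
    using ex_bij_betw_finite_nat[of "UNIV :: 'n set"] by auto
  have "solves_lq_mean_est q \<epsilon> n (2 * CARD('n) * M) (level_queries h M) (level_estimate h M n)"
    using assms d M h error_budget_le[of q \<epsilon> "real M" L] L
    by (intro level_estimate_solves) (auto simp: n_def bij_betw_def)
  moreover have "real (2 * CARD('n) * M) \<le> 2 * real CARD('n) * L" using M by simp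
  ultimately show ?thesis unfolding n_def L_def by blast
qed

end
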